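(* Let $(D_d)_{d\in\mathbb{N}}$ satisfy Property (P), let $(L_d)$ be positive numbers with $\lim_{d\to\infty}L_d\sqrt d=0$, and let $C_d^0(L)=\{f\colon D_d\to\mathbb{R}\mid \|f\|_\infty\le1,\ \operatorname{Lip}(f)\le L_d\}$. Then for every $\varepsilon\in(0,1)$ there is $d(\varepsilon)$ such that $n(\varepsilon,C_d^0(L))=1$ for all $d\ge d(\varepsilon)$.
   Context: Property (P): $(D_d)$ is a sequence of open sets $D_d\subset\mathbb R^d$ with $\lambda_d(D_d)=1$ for which there exist $x_d^*\in D_d$ and $R<\infty$ with $\lim_{d\to\infty}\lambda_d(\{x\in D_d\mid\|x-x_d^*\|_2\ge R\sqrt d\})=0$. $\operatorname{Lip}(f)=\sup_{x\ne y}|f(x)-f(y)|/\|x-y\|_2$. Information complexity $n(\varepsilon,F_d)$: the minimal number $n\ge0$ of function values such that some algorithm $A_{n,d}(f)=\phi_{n,d}(f(x_1),\dots,f(x_n))$ (points $x_j\in D_d$ possibly adaptive, $\phi_{n,d}$ arbitrary; constants if $n=0$) satisfies $\sup_{f\in F_d}|\int_{D_d}f(x)\,dx-A_{n,d}(f)|\le\varepsilon$. *)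

theory Defs
  imports "HOL-Analysis.Analysis"
begin

text \<open>R^d is modelled as the extensional functions {..<d} to UNIV (PiE),
  with Lebesgue measure the finite product of lborel.\<close>

definition Rd :: "nat \<Rightarrow> (nat \<Rightarrow> real) set" where
  "Rd d = ({..<d} \<rightarrow>\<^sub>E (UNIV :: real set))"

definition lebesgue_d :: "nat \<Rightarrow> (nat \<Rightarrow> real) measure" where
  "lebesgue_d d = PiM {..<d} (\<lambda>_. lborel)"

definition enorm :: "nat \<Rightarrow> (nat \<Rightarrow> real) \<Rightarrow> real" where
  "enorm d x = sqrt (\<Sum>i<d. (x i)\<^sup>2)"

definition edist :: "nat \<Rightarrow> (nat \<Rightarrow> real) \<Rightarrow> (nat \<Rightarrow> real) \<Rightarrow> real" where
  "edist d x y = enorm d (\<lambda>i. x i - y i)"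

definition open_d :: "nat \<Rightarrow> (nat \<Rightarrow> real) set \<Rightarrow> bool" where
  "open_d d D \<longleftrightarrow> D \<subseteq> Rd d \<and>
     (\<forall>x\<in>D. \<exists>e>0. \<forall>y\<in>Rd d. edist d x y < e \<longrightarrow> y \<in> D)"

definition property_P :: "(nat \<Rightarrow> (nat \<Rightarrow> real) set) \<Rightarrow> bool" where
  "property_P D \<longleftrightarrow>
     (\<forall>d. open_d d (D d) \<and> measure (lebesgue_d d) (D d) = 1) \<and>
     (\<exists>xs R. (\<forall>d. xs d \<in> D d) \<and>
        (\<lambda>d. measure (lebesgue_d d)
               {x \<in> D d. edist d x (xs d) \<ge> R * sqrt (real d)}) \<longlonglongrightarrow> 0)"

definition C0 :: "nat \<Rightarrow> (nat \<Rightarrow> real) set \<Rightarrow> real \<Rightarrow> ((nat \<Rightarrow> real) \<Rightarrow> real) set" where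
  "C0 d D L = {f. (\<forall>x\<in>D. \<bar>f x\<bar> \<le> 1) \<and>
                  (\<forall>x\<in>D. \<forall>y\<in>D. \<bar>f x - f y\<bar> \<le> L * edist d x y)}"

text \<open>Adaptive information: P j ys is the (j+1)-st node, chosen from the
  previously observed values ys (a list of length j).\<close>
fun info_vals :: "(nat \<Rightarrow> real list \<Rightarrow> 'a) \<Rightarrow> ('a \<Rightarrow> real) \<Rightarrow> nat \<Rightarrow> real list" where
  "info_vals P f 0 = []"
| "info_vals P f (Suc j) = (let ys = info_vals P f j in ys @ [f (P j ys)])"

definition info_compl ::
  "real \<Rightarrow> ((nat \<Rightarrow> real) \<Rightarrow> real) set \<Rightarrow> nat \<Rightarrow> (nat \<Rightarrow> real) set \<Rightarrow> nat" where
  "info_compl \<epsilon> F d D = (LEAST n. \<exists>(P :: nat \<Rightarrow> real list \<Rightarrow> (nat \<Rightarrow> real)) (\<phi> :: real list \<Rightarrow> real).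
      (\<forall>j<n. \<forall>ys. length ys = j \<longrightarrow> P j ys \<in> D) \<and>
      (\<forall>f\<in>F. \<bar>(LINT x:D|lebesgue_d d. f x) - \<phi> (info_vals P f n)\<bar> \<le> \<epsilon>))"

end

theory Submission
  imports Defs
begin

text \<open>A single function value suffices: take the centre \<open>x\<^sub>d\<^sup>*\<close> of Property (P) as node
  and \<open>f(x\<^sub>d\<^sup>*)\<close> as the approximation. Since \<open>|f| \<le> 1\<close> the error is at most \<open>2\<close> on the
  part of \<open>D\<^sub>d\<close> at distance \<open>\<ge> R\<surd>d\<close> from the centre, whose measure tends to \<open>0\<close>, and at
  most \<open>L\<^sub>d R \<surd>d \<rightarrow> 0\<close> elsewhere. No algorithm without function values can do better
  than error \<open>1\<close>, because it cannot tell the constants \<open>1\<close> and \<open>-1\<close> apart.\<close>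

lemma measure_nonzero_imp_fmeasurable:
  assumes "measure M A \<noteq> 0"
  shows "A \<in> fmeasurable M"
  using assms measure_notin_sets[of A M] measure_zero_top[of M A]
  by (intro fmeasurableI) (auto simp: less_top[symmetric])

lemma set_integral_deviation_le:
  fixes f :: "'a \<Rightarrow> real"
  assumes D: "D \<in> fmeasurable M" "measure M D = 1" and A: "A \<in> sets M"
    and f: "set_integrable M D f"
    and far: "\<And>x. x \<in> D \<Longrightarrow> \<bar>f x - c\<bar> \<le> b"
    and near: "\<And>x. x \<in> D \<Longrightarrow> x \<notin> A \<Longrightarrow> \<bar>f x - c\<bar> \<le> s" and "0 \<le> s"
  shows "\<bar>(LINT x:D|M. f x) - c\<bar> \<le> b * measure M (D \<inter> A) + s"
proof -
  have Dsets: "D \<in> sets M" and Dfin: "emeasure M D < \<infinity>"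
    using D(1) by (auto simp: fmeasurable_def)
  have const: "set_integrable M D (\<lambda>_. r)" for r :: real
    unfolding set_integrable_def using Dsets Dfin by simp
  have ind: "set_integrable M D (indicator A :: _ \<Rightarrow> real)"
    unfolding set_integrable_def using Dsets Dfin A emeasure_mono[of "D \<inter> A" D M] by (auto simp: indicator_inter_arith[symmetric])
  have integral_const: "(LINT x:D|M. r) = r" for r :: real
    using set_integral_const[OF Dsets] Dfin D(2) by (simp add: less_top[symmetric])
  have dev: "set_integrable M D (\<lambda>x. f x - c)"
    by (rule set_integral_diff(1)[OF f const])
  have "(LINT x:D|M. f x) - c = (LINT x:D|M. f x - c)"
    by (simp add: set_integral_diff(2)[OF f const] integral_const)
  also have "\<bar>\<dots>\<bar> \<le> (LINT x:D|M. \<bar>f x - c\<bar>)"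
    unfolding set_lebesgue_integral_def
    by (rule order_trans[OF integral_abs_bound]) (simp add: abs_mult)
  also have "\<dots> \<le> (LINT x:D|M. b * indicator A x + s)"
  proof (rule set_integral_mono)
    show "set_integrable M D (\<lambda>x. b * indicator A x + s)"
      by (intro set_integral_add(1) set_integrable_mult_right ind const)
    show "\<bar>f x - c\<bar> \<le> b * indicator A x + s" if "x \<in> D" for x
      using far[OF that] near[OF that] \<open>0 \<le> s\<close> by (cases "x \<in> A") auto
  qed (rule set_integrable_abs[OF dev])
  also have "\<dots> = b * (LINT x:D|M. indicator A x) + s"
    by (simp add: set_integral_add(2)[OF set_integrable_mult_right[OF ind] const] integral_const)
  also have "(LINT x:D|M. indicator A x) = measure M (D \<inter> A)"
    using Dsets A unfolding set_lebesgue_integral_def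
    by (simp add: indicator_inter_arith[symmetric] Int_absorb2 sets.sets_into_space)
  finally show ?thesis .
qed
lemma space_lebesgue_d: "space (lebesgue_d d) = Rd d"
  by (simp add: lebesgue_d_def Rd_def space_PiM)

lemma edist_commute: "edist d x y = edist d y x"
  unfolding edist_def enorm_def by (simp add: power2_commute)

lemma edist_nonneg: "0 \<le> edist d x y"
  unfolding edist_def enorm_def by (simp add: sum_nonneg)

lemma edist_le_sqrt_dim_mult:
  assumes "0 \<le> \<delta>" and "\<And>i. i < d \<Longrightarrow> \<bar>x i - y i\<bar> \<le> \<delta>"
  shows "edist d x y \<le> sqrt (real d) * \<delta>"
proof -
  have "(\<Sum>i<d. (x i - y i)\<^sup>2) \<le> (\<Sum>i<d. \<delta>\<^sup>2)"
    using assms by (intro sum_mono) (metis abs_ge_zero power2_abs power_mono lessThan_iff)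
  then have "edist d x y \<le> sqrt (real d * \<delta>\<^sup>2)"
    unfolding edist_def enorm_def by simp
  with assms(1) show ?thesis
    by (simp add: real_sqrt_mult)
qed

lemma open_d_rational_box:
  assumes U: "open_d d U" and "x \<in> U"
  obtains q r where "q \<in> PiE {..<d} (\<lambda>_. \<rat>)" and "r \<in> PiE {..<d} (\<lambda>_. \<rat>)"
    and "x \<in> PiE {..<d} (\<lambda>i. {q i<..<r i})" and "PiE {..<d} (\<lambda>i. {q i<..<r i}) \<subseteq> U"
proof -
  from U \<open>x \<in> U\<close> obtain e where "e > 0" and e: "\<And>y. y \<in> Rd d \<Longrightarrow> edist d x y < e \<Longrightarrow> y \<in> U"
    and x: "x \<in> Rd d"
    unfolding open_d_def by blast
  define \<delta> where "\<delta> = e / (sqrt (real d) + 1)"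
  have "sqrt (real d) + 1 > 0"
    by (simp add: add_nonneg_pos)
  then have "\<delta> > 0" and "sqrt (real d) * \<delta> < e"
    using \<open>e > 0\<close> by (auto simp: \<delta>_def field_simps)
  have dense: "\<rat> \<inter> {a<..<b} \<noteq> {}" if "a < b" for a b :: real
    using Rats_dense_in_real[OF that] by auto
  have "PiE {..<d} (\<lambda>i. \<rat> \<inter> {x i - \<delta><..<x i}) \<noteq> {}"
    and "PiE {..<d} (\<lambda>i. \<rat> \<inter> {x i<..<x i + \<delta>}) \<noteq> {}"
    using \<open>\<delta> > 0\<close> by (simp_all add: PiE_eq_empty_iff dense)
  then obtain q r where q: "q \<in> PiE {..<d} (\<lambda>i. \<rat> \<inter> {x i - \<delta><..<x i})"
    and r: "r \<in> PiE {..<d} (\<lambda>i. \<rat> \<inter> {x i<..<x i + \<delta>})"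
    by blast
  have "PiE {..<d} (\<lambda>i. {q i<..<r i}) \<subseteq> U"
  proof
    fix y assume y: "y \<in> PiE {..<d} (\<lambda>i. {q i<..<r i})"
    have "\<bar>x i - y i\<bar> \<le> \<delta>" if "i < d" for i
    proof -
      have "q i < y i" "y i < r i"
        using y that by (auto simp: PiE_iff)
      moreover have "x i - \<delta> < q i" "r i < x i + \<delta>"
        using q r that by (auto simp: PiE_iff)
      ultimately show ?thesis by linarith
    qed
    then have "edist d x y < e"
      using edist_le_sqrt_dim_mult[of \<delta> d x y] \<open>\<delta> > 0\<close> \<open>sqrt (real d) * \<delta> < e\<close> by simp
    moreover have "y \<in> Rd d"
      using y by (auto simp: Rd_def PiE_def)
    ultimately show "y \<in> U" by (rule e[rotated])
  qed
  moreover have "x \<in> PiE {..<d} (\<lambda>i. {q i<..<r i})"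
    using x q r by (auto simp: Rd_def PiE_iff)
  moreover have "q \<in> PiE {..<d} (\<lambda>_. \<rat>)" "r \<in> PiE {..<d} (\<lambda>_. \<rat>)"
    using q r by (auto simp: PiE_iff)
  ultimately show ?thesis
    using that by blast
qed

lemma sets_lebesgue_d_if_open_d:
  assumes U: "open_d d U"
  shows "U \<in> sets (lebesgue_d d)"
proof -
  define box where "box = (\<lambda>(q, r). PiE {..<d} (\<lambda>i. {q i<..<r i :: real}))"
  define QV where "QV = PiE {..<d} (\<lambda>_. \<rat> :: real set)"
  define S where "S = {p \<in> QV \<times> QV. box p \<subseteq> U}"
  have "countable QV"
    unfolding QV_def by (rule countable_PiE) (auto simp: countable_rat)
  then have countable: "countable (box ` S)"
    by (intro countable_image countable_subset[of S "QV \<times> QV"]) (auto simp: S_def)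
  have sets_box: "box p \<in> sets (lebesgue_d d)" for p
    unfolding lebesgue_d_def box_def by (cases p) (auto intro!: sets_PiM_I_finite)
  have "U \<subseteq> \<Union>(box ` S)"
  proof
    fix x assume "x \<in> U"
    then obtain q r where "q \<in> QV" "r \<in> QV" "x \<in> box (q, r)" "box (q, r) \<subseteq> U"
      by (rule open_d_rational_box[OF U]) (simp add: QV_def box_def)
    then show "x \<in> \<Union>(box ` S)"
      by (auto simp: S_def)
  qed
  then have "U = \<Union>(box ` S)"
    by (auto simp: S_def)
  then show ?thesis
    using sets.countable_Union[OF countable, of "lebesgue_d d"] sets_box by blast
qed

lemma open_d_Lipschitz_sublevel:
  assumes D: "open_d d D" and "L > 0"
    and lip: "\<And>x y. x \<in> D \<Longrightarrow> y \<in> D \<Longrightarrow> \<bar>f x - f y\<bar> \<le> L * edist d x y"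
  shows "open_d d {x \<in> D. f x < a}"
  unfolding open_d_def
proof (intro conjI ballI)
  show "{x \<in> D. f x < a} \<subseteq> Rd d"
    using D by (auto simp: open_d_def)
next
  fix x assume x: "x \<in> {x \<in> D. f x < a}"
  with D obtain e where "e > 0" and e: "\<And>y. y \<in> Rd d \<Longrightarrow> edist d x y < e \<Longrightarrow> y \<in> D"
    unfolding open_d_def by blast
  define e' where "e' = min e ((a - f x) / L)"
  have "y \<in> {x \<in> D. f x < a}" if "y \<in> Rd d" "edist d x y < e'" for y
  proof -
    have "y \<in> D"
      using e that by (auto simp: e'_def)
    have "f y - f x \<le> L * edist d x y"
      using lip[OF \<open>y \<in> D\<close>] x by (simp add: edist_commute abs_le_iff)
    also have "\<dots> < L * ((a - f x) / L)"
      using that \<open>L > 0\<close> by (intro mult_strict_left_mono) (auto simp: e'_def)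
    also have "\<dots> = a - f x"
      using \<open>L > 0\<close> by simp
    finally show ?thesis
      using \<open>y \<in> D\<close> by simp
  qed
  moreover have "e' > 0"
    using \<open>e > 0\<close> x \<open>L > 0\<close> by (auto simp: e'_def)
  ultimately show "\<exists>e>0. \<forall>y\<in>Rd d. edist d x y < e \<longrightarrow> y \<in> {x \<in> D. f x < a}"
    by blast
qed

lemma set_borel_measurable_Lipschitz:
  assumes D: "open_d d D" and "L > 0"
    and lip: "\<And>x y. x \<in> D \<Longrightarrow> y \<in> D \<Longrightarrow> \<bar>f x - f y\<bar> \<le> L * edist d x y"
  shows "set_borel_measurable (lebesgue_d d) D f"
  unfolding set_borel_measurable_def borel_measurable_iff_less
proof
  fix a :: real
  have "D \<subseteq> space (lebesgue_d d)"
    using D by (simp add: open_d_def space_lebesgue_d)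
  then have "{x \<in> space (lebesgue_d d). indicator D x *\<^sub>R f x < a} =
      {x \<in> D. f x < a} \<union> (if 0 < a then space (lebesgue_d d) - D else {})"
    by (auto simp: indicator_def)
  then show "{x \<in> space (lebesgue_d d). indicator D x *\<^sub>R f x < a} \<in> sets (lebesgue_d d)"
    using sets_lebesgue_d_if_open_d[OF open_d_Lipschitz_sublevel[OF D \<open>L > 0\<close> lip]]
      sets_lebesgue_d_if_open_d[OF D]
    by auto
qed

lemma C0_set_integral_deviation_le:
  assumes D: "open_d d D" "measure (lebesgue_d d) D = 1" and "x0 \<in> D" and "L > 0"
    and f: "f \<in> C0 d D L"
  shows "\<bar>(LINT x:D|lebesgue_d d. f x) - f x0\<bar>
    \<le> 2 * measure (lebesgue_d d) {x \<in> D. r \<le> edist d x x0} + L * \<bar>r\<bar>"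
proof -
  let ?M = "lebesgue_d d"
  have bounded: "\<And>x. x \<in> D \<Longrightarrow> \<bar>f x\<bar> \<le> 1"
    and lip: "\<And>x y. x \<in> D \<Longrightarrow> y \<in> D \<Longrightarrow> \<bar>f x - f y\<bar> \<le> L * edist d x y"
    using f by (auto simp: C0_def)
  have fin: "D \<in> fmeasurable ?M"
    using D(2) by (intro measure_nonzero_imp_fmeasurable) simp
  define A where "A = {x \<in> space ?M. r \<le> edist d x x0}"
  have A: "A \<in> sets ?M"
    unfolding A_def edist_def enorm_def lebesgue_d_def by measurable
  have integrable: "set_integrable ?M D f"
  proof (rule set_integrable_bound)
    show "set_integrable ?M D (\<lambda>_. 1 :: real)"
      using fin unfolding set_integrable_def fmeasurable_def by simp
    show "set_borel_measurable ?M D f"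
      by (rule set_borel_measurable_Lipschitz[OF D(1) \<open>L > 0\<close> lip])
    show "AE x in ?M. x \<in> D \<longrightarrow> norm (f x) \<le> norm (1 :: real)"
      using bounded by simp
  qed
  have tail: "D \<inter> A = {x \<in> D. r \<le> edist d x x0}"
    using D(1) by (auto simp: A_def open_d_def space_lebesgue_d)
  have far: "\<bar>f x - f x0\<bar> \<le> 2" if "x \<in> D" for x
    using bounded[OF that] bounded[OF \<open>x0 \<in> D\<close>] by linarith
  have near: "\<bar>f x - f x0\<bar> \<le> L * \<bar>r\<bar>" if "x \<in> D" "x \<notin> A" for x
  proof -
    have "edist d x x0 \<le> \<bar>r\<bar>"
      using that D(1) by (auto simp: A_def open_d_def space_lebesgue_d)
    then show ?thesis
      using lip[OF that(1) \<open>x0 \<in> D\<close>] \<open>L > 0\<close> by (smt (verit) mult_left_mono)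
  qed
  have "\<bar>(LINT x:D|?M. f x) - f x0\<bar> \<le> 2 * measure ?M (D \<inter> A) + L * \<bar>r\<bar>"
    using \<open>L > 0\<close> by (intro set_integral_deviation_le[OF fin D(2) A integrable far near]) auto
  with tail show ?thesis by simp
qed

lemma const_in_C0: "\<bar>c\<bar> \<le> 1 \<Longrightarrow> 0 \<le> L \<Longrightarrow> (\<lambda>_. c) \<in> C0 d D L"
  by (simp add: C0_def edist_nonneg)

lemma info_compl_eq_1:
  assumes "x0 \<in> D" and "measure (lebesgue_d d) D = 1" and "\<epsilon> < 1"
    and err: "\<And>f. f \<in> F \<Longrightarrow> \<bar>(LINT x:D|lebesgue_d d. f x) - f x0\<bar> \<le> \<epsilon>"
    and const: "(\<lambda>_. 1) \<in> F" "(\<lambda>_. -1) \<in> F"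
  shows "info_compl \<epsilon> F d D = 1"
  unfolding info_compl_def
proof (rule Least_equality)
  show "\<exists>(P :: nat \<Rightarrow> real list \<Rightarrow> (nat \<Rightarrow> real)) \<phi>. (\<forall>j<1. \<forall>ys. length ys = j \<longrightarrow> P j ys \<in> D) \<and>
      (\<forall>f\<in>F. \<bar>(LINT x:D|lebesgue_d d. f x) - \<phi> (info_vals P f 1)\<bar> \<le> \<epsilon>)"
    using \<open>x0 \<in> D\<close> err by (intro exI[of _ "\<lambda>_ _. x0"] exI[of _ hd]) simp
next
  fix n
  assume "\<exists>(P :: nat \<Rightarrow> real list \<Rightarrow> (nat \<Rightarrow> real)) \<phi>. (\<forall>j<n. \<forall>ys. length ys = j \<longrightarrow> P j ys \<in> D) \<and>
      (\<forall>f\<in>F. \<bar>(LINT x:D|lebesgue_d d. f x) - \<phi> (info_vals P f n)\<bar> \<le> \<epsilon>)"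
  then obtain P \<phi> where P: "\<And>f. f \<in> F \<Longrightarrow> \<bar>(LINT x:D|lebesgue_d d. f x) - \<phi> (info_vals P f n)\<bar> \<le> \<epsilon>"
    by blast
  show "1 \<le> n"
  proof (rule ccontr)
    assume "\<not> 1 \<le> n"
    then have "n = 0" by simp
    have "D \<in> fmeasurable (lebesgue_d d)"
      using assms(2) by (intro measure_nonzero_imp_fmeasurable) simp
    then have "(LINT x:D|lebesgue_d d. c) = c" for c :: real
      using set_integral_const[of D "lebesgue_d d" c] assms(2)
      by (simp add: fmeasurable_def less_top[symmetric])
    then have "\<bar>1 - \<phi> []\<bar> \<le> \<epsilon>" "\<bar>-1 - \<phi> []\<bar> \<le> \<epsilon>"
      using P[OF const(1)] P[OF const(2)] \<open>n = 0\<close> by simp_all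
    with \<open>\<epsilon> < 1\<close> show False by linarith
  qed
qed

theorem proposition3p3:
  fixes D :: "nat \<Rightarrow> (nat \<Rightarrow> real) set" and L :: "nat \<Rightarrow> real"
  assumes "property_P D"
    and "\<And>d. L d > 0"
    and "(\<lambda>d. L d * sqrt (real d)) \<longlonglongrightarrow> 0"
  shows "\<forall>\<epsilon>. 0 < \<epsilon> \<and> \<epsilon> < 1 \<longrightarrow>
           (\<exists>d0. \<forall>d\<ge>d0. info_compl \<epsilon> (C0 d (D d) (L d)) d (D d) = 1)"
proof (intro allI impI)
  fix \<epsilon> :: real assume \<epsilon>: "0 < \<epsilon> \<and> \<epsilon> < 1"
  have D: "open_d d (D d)" "measure (lebesgue_d d) (D d) = 1" for d
    using assms(1) unfolding property_P_def by blast+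
  obtain xs R where xs: "\<And>d. xs d \<in> D d"
    and tail: "(\<lambda>d. measure (lebesgue_d d) {x \<in> D d. R * sqrt (real d) \<le> edist d x (xs d)}) \<longlonglongrightarrow> 0"
    using assms(1) unfolding property_P_def by blast
  let ?bound = "\<lambda>d. 2 * measure (lebesgue_d d) {x \<in> D d. R * sqrt (real d) \<le> edist d x (xs d)}
    + \<bar>R\<bar> * (L d * sqrt (real d))"
  have "?bound \<longlonglongrightarrow> 2 * 0 + \<bar>R\<bar> * 0"
    by (intro tendsto_intros tail assms(3))
  then have "eventually (\<lambda>d. ?bound d < \<epsilon>) sequentially"
    using \<epsilon> by (intro order_tendstoD(2)) auto
  then obtain d0 where d0: "\<And>d. d \<ge> d0 \<Longrightarrow> ?bound d < \<epsilon>"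
    unfolding eventually_sequentially by blast
  have "info_compl \<epsilon> (C0 d (D d) (L d)) d (D d) = 1" if "d \<ge> d0" for d
  proof (rule info_compl_eq_1[OF xs D(2)])
    fix f assume "f \<in> C0 d (D d) (L d)"
    then have "\<bar>(LINT x:D d|lebesgue_d d. f x) - f (xs d)\<bar>
        \<le> 2 * measure (lebesgue_d d) {x \<in> D d. R * sqrt (real d) \<le> edist d x (xs d)}
          + L d * \<bar>R * sqrt (real d)\<bar>"
      by (rule C0_set_integral_deviation_le[OF D xs assms(2)])
    also have "\<dots> = ?bound d"
      by (simp add: abs_mult)
    also have "\<dots> < \<epsilon>"
      using d0[OF that] .
    finally show "\<bar>(LINT x:D d|lebesgue_d d. f x) - f (xs d)\<bar> \<le> \<epsilon>"
      by simp
  qed (use \<epsilon> assms(2) in \<open>simp_all add: const_in_C0 less_imp_le\<close>)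
  then show "\<exists>d0. \<forall>d\<ge>d0. info_compl \<epsilon> (C0 d (D d) (L d)) d (D d) = 1"
    by blast
qed

end
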